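(* If $\mathcal{L}$ has finite signature, then the $n$-bisimulation topology $\mathcal{T}_{B}$ is the Stone(-like) topology $\mathcal{T}_{\boldsymbol{\mathcal{L}}_{\Lambda}}$ on $\boldsymbol{X}_{\boldsymbol{\mathcal{L}}_{\Lambda}}$.
   Context: $\mathcal{L}$ is the basic modal language over a countable non-empty set of atoms $\Phi$ and a countable non-empty set of operator indices $\mathcal{I}$ (finite signature: both $\Phi$ and $\mathcal{I}$ finite). $X$ is a set of pointed Kripke models for which modal equivalence and bisimilarity coincide (e.g. image-finite models), and $\Lambda$ is a normal modal logic sound with respect to $X$. $\boldsymbol{X}_{\boldsymbol{\mathcal{L}}_{\Lambda}}$ is the quotient of $X$ under $\Lambda$-equivalence (models identified iff they satisfy the same formulas). The Stone(-like) topology $\mathcal{T}_{\boldsymbol{\mathcal{L}}_{\Lambda}}$ has as basis the sets $\{\boldsymbol{x}\colon x\models\varphi\}$ for $\varphi\in\mathcal{L}$. Writing $x\,\underline{\leftrightarrow}_{n}\,y$ for "$x$ and $y$ are $n$-bisimilar", the $n$-bisimulation metric is $d_{B}(\boldsymbol{x},\boldsymbol{y})=0$ if $x\,\underline{\leftrightarrow}_{n}\,y$ for all $n$, and $d_{B}(\boldsymbol{x},\boldsymbol{y})=\frac{1}{n}$ for the least $n$ with $x$ and $y$ not $n$-bisimilar; the $n$-bisimulation topology $\mathcal{T}_{B}$ is its metric topology, with basis the sets $B_{\boldsymbol{x}n}=\{\boldsymbol{y}\colon y\,\underline{\leftrightarrow}_{n}\,x\}$. *)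

theory Defs
  imports "HOL-Analysis.Analysis"
begin

datatype ('a, 'i) fm =
    Atom 'a
  | Bot
  | Neg "('a, 'i) fm"
  | Conj "('a, 'i) fm" "('a, 'i) fm"
  | Box 'i "('a, 'i) fm"

definition Imp :: "('a, 'i) fm \<Rightarrow> ('a, 'i) fm \<Rightarrow> ('a, 'i) fm" where
  "Imp p q = Neg (Conj p (Neg q))"

text \<open>A Kripke model with worlds of type 'w: one accessibility relation per
index and a valuation of the atoms. A pointed model is a model with a world.\<close>

type_synonym ('a, 'i, 'w) kripke = "('i \<Rightarrow> 'w \<Rightarrow> 'w \<Rightarrow> bool) \<times> ('a \<Rightarrow> 'w \<Rightarrow> bool)"
type_synonym ('a, 'i, 'w) pointed = "('a, 'i, 'w) kripke \<times> 'w"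

fun sem :: "('a, 'i, 'w) kripke \<Rightarrow> 'w \<Rightarrow> ('a, 'i) fm \<Rightarrow> bool" where
  "sem M w (Atom p) = snd M p w"
| "sem M w Bot = False"
| "sem M w (Neg p) = (\<not> sem M w p)"
| "sem M w (Conj p q) = (sem M w p \<and> sem M w q)"
| "sem M w (Box i p) = (\<forall>v. fst M i w v \<longrightarrow> sem M v p)"

definition sat :: "('a, 'i, 'w) pointed \<Rightarrow> ('a, 'i) fm \<Rightarrow> bool" where
  "sat x \<phi> = sem (fst x) (snd x) \<phi>"

definition modal_equiv :: "('a, 'i, 'w) pointed \<Rightarrow> ('a, 'i, 'w) pointed \<Rightarrow> bool" where
  "modal_equiv x y = (\<forall>\<phi>. sat x \<phi> = sat y \<phi>)"

definition bisimulation ::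
  "('a, 'i, 'w) kripke \<Rightarrow> ('a, 'i, 'w) kripke \<Rightarrow> ('w \<Rightarrow> 'w \<Rightarrow> bool) \<Rightarrow> bool" where
  "bisimulation M N Z =
     (\<forall>w v. Z w v \<longrightarrow>
        (\<forall>p. snd M p w = snd N p v) \<and>
        (\<forall>i w'. fst M i w w' \<longrightarrow> (\<exists>v'. fst N i v v' \<and> Z w' v')) \<and>
        (\<forall>i v'. fst N i v v' \<longrightarrow> (\<exists>w'. fst M i w w' \<and> Z w' v')))"

definition bisimilar :: "('a, 'i, 'w) pointed \<Rightarrow> ('a, 'i, 'w) pointed \<Rightarrow> bool" where
  "bisimilar x y = (\<exists>Z. bisimulation (fst x) (fst y) Z \<and> Z (snd x) (snd y))"

fun nbisim_w :: "nat \<Rightarrow> ('a, 'i, 'w) kripke \<Rightarrow> 'w \<Rightarrow> ('a, 'i, 'w) kripke \<Rightarrow> 'w \<Rightarrow> bool" where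
  "nbisim_w 0 M w N v = (\<forall>p. snd M p w = snd N p v)"
| "nbisim_w (Suc n) M w N v =
     ((\<forall>p. snd M p w = snd N p v) \<and>
      (\<forall>i w'. fst M i w w' \<longrightarrow> (\<exists>v'. fst N i v v' \<and> nbisim_w n M w' N v')) \<and>
      (\<forall>i v'. fst N i v v' \<longrightarrow> (\<exists>w'. fst M i w w' \<and> nbisim_w n M w' N v')))"

definition nbisim :: "nat \<Rightarrow> ('a, 'i, 'w) pointed \<Rightarrow> ('a, 'i, 'w) pointed \<Rightarrow> bool" where
  "nbisim n x y = nbisim_w n (fst x) (snd x) (fst y) (snd y)"

text \<open>Propositional evaluation treating atoms and boxed formulas as propositional letters.\<close>
fun peval :: "(('a, 'i) fm \<Rightarrow> bool) \<Rightarrow> ('a, 'i) fm \<Rightarrow> bool" where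
  "peval g (Atom p) = g (Atom p)"
| "peval g Bot = False"
| "peval g (Neg p) = (\<not> peval g p)"
| "peval g (Conj p q) = (peval g p \<and> peval g q)"
| "peval g (Box i p) = g (Box i p)"

definition tautology :: "('a, 'i) fm \<Rightarrow> bool" where
  "tautology \<phi> = (\<forall>g. peval g \<phi>)"

fun subst :: "('a \<Rightarrow> ('a, 'i) fm) \<Rightarrow> ('a, 'i) fm \<Rightarrow> ('a, 'i) fm" where
  "subst s (Atom p) = s p"
| "subst s Bot = Bot"
| "subst s (Neg p) = Neg (subst s p)"
| "subst s (Conj p q) = Conj (subst s p) (subst s q)"
| "subst s (Box i p) = Box i (subst s p)"

definition normal_modal_logic :: "('a, 'i) fm set \<Rightarrow> bool" where
  "normal_modal_logic L =
     ((\<forall>\<phi>. tautology \<phi> \<longrightarrow> \<phi> \<in> L) \<and>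
      (\<forall>i p q. Imp (Box i (Imp p q)) (Imp (Box i p) (Box i q)) \<in> L) \<and>
      (\<forall>p q. p \<in> L \<longrightarrow> Imp p q \<in> L \<longrightarrow> q \<in> L) \<and>
      (\<forall>i p. p \<in> L \<longrightarrow> Box i p \<in> L) \<and>
      (\<forall>s p. p \<in> L \<longrightarrow> subst s p \<in> L))"

definition sound_wrt :: "('a, 'i) fm set \<Rightarrow> ('a, 'i, 'w) pointed set \<Rightarrow> bool" where
  "sound_wrt L X = (\<forall>\<phi>\<in>L. \<forall>x\<in>X. sat x \<phi>)"

definition eq_class :: "('a, 'i, 'w) pointed set \<Rightarrow> ('a, 'i, 'w) pointed \<Rightarrow> ('a, 'i, 'w) pointed set" where
  "eq_class X x = {y \<in> X. \<forall>\<phi>. sat y \<phi> = sat x \<phi>}"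

definition quotient_space :: "('a, 'i, 'w) pointed set \<Rightarrow> ('a, 'i, 'w) pointed set set" where
  "quotient_space X = eq_class X ` X"

definition stone_basic :: "('a, 'i, 'w) pointed set \<Rightarrow> ('a, 'i) fm \<Rightarrow> ('a, 'i, 'w) pointed set set" where
  "stone_basic X \<phi> = {c \<in> quotient_space X. \<exists>x\<in>c. sat x \<phi>}"

definition stone_topology :: "('a, 'i, 'w) pointed set \<Rightarrow> ('a, 'i, 'w) pointed set topology" where
  "stone_topology X = topology_generated_by (range (stone_basic X))"

definition bisim_ball :: "('a, 'i, 'w) pointed set \<Rightarrow> ('a, 'i, 'w) pointed \<Rightarrow> nat \<Rightarrow> ('a, 'i, 'w) pointed set set" where
  "bisim_ball X x n = {c \<in> quotient_space X. \<exists>y\<in>c. nbisim n y x}"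

definition nbisim_topology :: "('a, 'i, 'w) pointed set \<Rightarrow> ('a, 'i, 'w) pointed set topology" where
  "nbisim_topology X = topology_generated_by {bisim_ball X x n | x n. x \<in> X}"

end

theory Submission
  imports Defs
begin

text \<open>Over a finite signature every pointed model x has, for each n, a characteristic
(Hintikka) formula of modal depth n that is satisfied exactly by the models n-bisimilar
to x; so every ball B_{x n} is a basic open set of the Stone topology. Conversely, a formula
of depth n is invariant under n-bisimilarity, so its extension is the union of the balls
of radius n around the models satisfying it. Each basis therefore generates the other.\<close>

lemma generate_topology_on_mono:
  assumes "generate_topology_on A s" and "\<And>a. a \<in> A \<Longrightarrow> generate_topology_on B a"
  shows "generate_topology_on B s"
  using assms by (induction rule: generate_topology_on.induct) (auto intro: generate_topology_on.intros)

lemma topology_generated_by_eqI: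
  assumes "\<And>a. a \<in> A \<Longrightarrow> generate_topology_on B a"
    and "\<And>b. b \<in> B \<Longrightarrow> generate_topology_on A b"
  shows "topology_generated_by A = topology_generated_by B"
  unfolding topology_eq openin_topology_generated_by_iff
  using assms generate_topology_on_mono by blast

lemma finite_funs_into:
  assumes "finite (UNIV :: 'a set)" and "finite S"
  shows "finite {f :: 'a \<Rightarrow> 'b. \<forall>x. f x \<in> S}"
  using finite_PiE[of UNIV "\<lambda>_. S"] assms by (simp add: PiE_UNIV_domain Pi_def)

fun Conjs :: "('a, 'i) fm list \<Rightarrow> ('a, 'i) fm" where
  "Conjs [] = Neg Bot"
| "Conjs (p # ps) = Conj p (Conjs ps)"

lemma sem_Conjs: "sem M w (Conjs ps) = (\<forall>p\<in>set ps. sem M w p)"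
  by (induction ps) auto

definition Big_Conj :: "('a, 'i) fm set \<Rightarrow> ('a, 'i) fm" where
  "Big_Conj S = Conjs (SOME ps. set ps = S)"

definition Big_Disj :: "('a, 'i) fm set \<Rightarrow> ('a, 'i) fm" where
  "Big_Disj S = Neg (Big_Conj (Neg ` S))"

definition Dia :: "'i \<Rightarrow> ('a, 'i) fm \<Rightarrow> ('a, 'i) fm" where
  "Dia i p = Neg (Box i (Neg p))"

lemma sem_Big_Conj: "finite S \<Longrightarrow> sem M w (Big_Conj S) = (\<forall>p\<in>S. sem M w p)"
  unfolding Big_Conj_def sem_Conjs by (metis (mono_tags, lifting) finite_list someI_ex)

lemma sem_Big_Disj: "finite S \<Longrightarrow> sem M w (Big_Disj S) = (\<exists>p\<in>S. sem M w p)"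
  unfolding Big_Disj_def by (simp add: sem_Big_Conj)

lemma sem_Dia: "sem M w (Dia i p) = (\<exists>v. fst M i w v \<and> sem M v p)"
  by (simp add: Dia_def)

definition valuation_fm :: "('a \<Rightarrow> bool) \<Rightarrow> ('a, 'i) fm" where
  "valuation_fm V = Big_Conj (range (\<lambda>p. if V p then Atom p else Neg (Atom p)))"

text \<open>T i is the set of characteristic formulas of the i-successors: each must be realised
by some i-successor, and every i-successor must realise one of them.\<close>
definition hintikka_step :: "('a \<Rightarrow> bool) \<Rightarrow> ('i \<Rightarrow> ('a, 'i) fm set) \<Rightarrow> ('a, 'i) fm" where
  "hintikka_step V T =
     Conj (valuation_fm V) (Big_Conj (range (\<lambda>i. Conj (Big_Conj (Dia i ` T i)) (Box i (Big_Disj (T i))))))"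

fun hintikka :: "nat \<Rightarrow> ('a, 'i, 'w) kripke \<Rightarrow> 'w \<Rightarrow> ('a, 'i) fm" where
  "hintikka 0 M w = valuation_fm (\<lambda>p. snd M p w)"
| "hintikka (Suc n) M w = hintikka_step (\<lambda>p. snd M p w) (\<lambda>i. hintikka n M ` {v. fst M i w v})"

lemma hintikka_in_range:
  "hintikka n (M :: ('a, 'i, 'w) kripke) w \<in> range (\<lambda>(M :: ('a, 'i, 'w) kripke, w). hintikka n M w)"
  by (rule range_eqI[of _ _ "(M, w)"]) simp

lemma finite_range_hintikka:
  assumes "finite (UNIV :: 'a set)" and "finite (UNIV :: 'i set)"
  shows "finite (range (\<lambda>(M :: ('a, 'i, 'w) kripke, w). hintikka n M w))"
proof (induction n)
  case 0
  have "range (\<lambda>(M :: ('a, 'i, 'w) kripke, w). hintikka 0 M w) \<subseteq> valuation_fm ` {V. \<forall>p. V p \<in> UNIV}"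
    by auto
  moreover have "finite (valuation_fm ` {V :: 'a \<Rightarrow> bool. \<forall>p. V p \<in> UNIV})"
    by (intro finite_imageI finite_funs_into assms(1)) simp
  ultimately show ?case
    by (rule finite_subset)
next
  case (Suc n)
  let ?S = "range (\<lambda>(M :: ('a, 'i, 'w) kripke, w). hintikka n M w)"
  let ?P = "{V :: 'a \<Rightarrow> bool. \<forall>p. V p \<in> UNIV} \<times> {T :: 'i \<Rightarrow> _. \<forall>i. T i \<in> Pow ?S}"
  have "range (\<lambda>(M :: ('a, 'i, 'w) kripke, w). hintikka (Suc n) M w) \<subseteq> case_prod hintikka_step ` ?P"
  proof clarify
    fix M :: "('a, 'i, 'w) kripke" and w
    have "((\<lambda>p. snd M p w), (\<lambda>i. hintikka n M ` {v. fst M i w v})) \<in> ?P"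
      using hintikka_in_range by blast
    then show "hintikka (Suc n) M w \<in> case_prod hintikka_step ` ?P"
      by (rule rev_image_eqI) simp
  qed
  moreover have "finite (case_prod hintikka_step ` ?P)"
    using assms Suc by (intro finite_imageI finite_cartesian_product finite_funs_into) auto
  ultimately show ?case
    by (rule finite_subset)
qed

lemma finite_hintikka_image:
  assumes "finite (UNIV :: 'a set)" and "finite (UNIV :: 'i set)"
  shows "finite (hintikka n (M :: ('a, 'i, 'w) kripke) ` A)"
  using hintikka_in_range by (blast intro: finite_subset[OF _ finite_range_hintikka[OF assms]])

lemma sem_valuation_fm:
  assumes "finite (UNIV :: 'a set)"
  shows "sem N u (valuation_fm V :: ('a, 'i) fm) = (\<forall>p. snd N p u = V p)"
proof -
  have literals: "finite (range (\<lambda>p. if V p then Atom p else (Neg (Atom p) :: ('a, 'i) fm)))"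
    by (rule finite_imageI[OF assms])
  have "sem N u (valuation_fm V :: ('a, 'i) fm) =
      (\<forall>p. sem N u (if V p then Atom p else (Neg (Atom p) :: ('a, 'i) fm)))"
    unfolding valuation_fm_def sem_Big_Conj[OF literals] by blast
  then show ?thesis
    by (metis sem.simps(1,3))
qed

lemma sem_hintikka_step:
  assumes "finite (UNIV :: 'a set)" and "finite (UNIV :: 'i set)" and "\<And>i. finite (T i)"
  shows "sem N u (hintikka_step V (T :: 'i \<Rightarrow> ('a, 'i) fm set)) \<longleftrightarrow>
     (\<forall>p. snd N p u = V p) \<and>
     (\<forall>i. (\<forall>t\<in>T i. \<exists>u'. fst N i u u' \<and> sem N u' t) \<and> (\<forall>u'. fst N i u u' \<longrightarrow> (\<exists>t\<in>T i. sem N u' t)))"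
proof -
  have "finite (range (\<lambda>i. Conj (Big_Conj (Dia i ` T i)) (Box i (Big_Disj (T i)))))"
    using assms(2) by simp
  then show ?thesis
    using assms(3)
    unfolding hintikka_step_def sem.simps sem_valuation_fm[OF assms(1)] sem_Big_Conj
    by (simp add: sem_Big_Conj sem_Big_Disj sem_Dia)
qed

lemma sem_hintikka_iff_nbisim_w:
  assumes "finite (UNIV :: 'a set)" and "finite (UNIV :: 'i set)"
  shows "sem N u (hintikka n (M :: ('a, 'i, 'w) kripke) w) \<longleftrightarrow> nbisim_w n N u M w"
proof (induction n arbitrary: u w)
  case 0
  then show ?case
    by (simp add: sem_valuation_fm[OF assms(1)])
next
  case (Suc n)
  have "finite (hintikka n M ` {v. fst M i w v})" for i w
    by (rule finite_hintikka_image[OF assms])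
  with Suc show ?case
    by (simp add: sem_hintikka_step[OF assms]) blast
qed

fun modal_depth :: "('a, 'i) fm \<Rightarrow> nat" where
  "modal_depth (Atom p) = 0"
| "modal_depth Bot = 0"
| "modal_depth (Neg p) = modal_depth p"
| "modal_depth (Conj p q) = max (modal_depth p) (modal_depth q)"
| "modal_depth (Box i p) = Suc (modal_depth p)"

lemma nbisim_w_atoms: "nbisim_w n M w N v \<Longrightarrow> snd M p w = snd N p v"
  by (cases n) auto

lemma nbisim_w_refl: "nbisim_w n M w M w"
  by (induction n arbitrary: w) auto

lemma sem_invariant_nbisim_w:
  "modal_depth \<phi> \<le> n \<Longrightarrow> nbisim_w n M w N v \<Longrightarrow> sem M w \<phi> = sem N v \<phi>"
proof (induction \<phi> arbitrary: n w v)
  case (Atom p)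
  then show ?case
    by (simp add: nbisim_w_atoms)
next
  case (Box i p)
  then obtain m where m: "n = Suc m" "modal_depth p \<le> m"
    by (cases n) auto
  with Box.prems(2) Box.IH[OF m(2)] show ?case
    by (simp, metis)
qed auto

lemma bisim_ball_eq_stone_basic:
  assumes "finite (UNIV :: 'a set)" and "finite (UNIV :: 'i set)"
  shows "bisim_ball X x n = stone_basic X (hintikka n (fst x) (snd x) :: ('a, 'i) fm)"
  unfolding bisim_ball_def stone_basic_def nbisim_def sat_def
  by (simp add: sem_hintikka_iff_nbisim_w[OF assms])

lemma stone_basic_eq_Union_bisim_ball:
  "stone_basic X \<phi> = \<Union> {bisim_ball X x (modal_depth \<phi>) | x. x \<in> X \<and> sat x \<phi>}"
proof safe
  fix c
  assume c: "c \<in> stone_basic X \<phi>"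
  then obtain y where y: "y \<in> c" "sat y \<phi>"
    unfolding stone_basic_def by auto
  with c have "y \<in> X" "c \<in> bisim_ball X y (modal_depth \<phi>)"
    unfolding stone_basic_def bisim_ball_def quotient_space_def eq_class_def nbisim_def
    by (auto intro: nbisim_w_refl)
  with y show "c \<in> \<Union> {bisim_ball X x (modal_depth \<phi>) | x. x \<in> X \<and> sat x \<phi>}"
    by blast
next
  fix c x
  assume "c \<in> bisim_ball X x (modal_depth \<phi>)" and "sat x \<phi>"
  then obtain y where "y \<in> c" "c \<in> quotient_space X" "nbisim (modal_depth \<phi>) y x"
    unfolding bisim_ball_def by auto
  with \<open>sat x \<phi>\<close> show "c \<in> stone_basic X \<phi>"
    unfolding stone_basic_def nbisim_def sat_def by (auto dest: sem_invariant_nbisim_w[OF order_refl])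
qed

theorem corollary27:
  fixes X :: "('a, 'i, 'w) pointed set" and \<Lambda> :: "('a, 'i) fm set"
  assumes "finite (UNIV :: 'a set)" and "finite (UNIV :: 'i set)"
    and "\<forall>x\<in>X. \<forall>y\<in>X. modal_equiv x y \<longleftrightarrow> bisimilar x y"
    and "normal_modal_logic \<Lambda>" and "sound_wrt \<Lambda> X"
  shows "nbisim_topology X = stone_topology X"
  unfolding nbisim_topology_def stone_topology_def
proof (rule topology_generated_by_eqI)
  fix B
  assume "B \<in> {bisim_ball X x n | x n. x \<in> X}"
  then obtain x n where "B = bisim_ball X x n"
    by blast
  then show "generate_topology_on (range (stone_basic X)) B"
    unfolding bisim_ball_eq_stone_basic[OF assms(1,2)] by (auto intro: generate_topology_on.Basis)
next
  fix B
  assume "B \<in> range (stone_basic X)"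
  then obtain \<phi> where "B = stone_basic X \<phi>"
    by blast
  show "generate_topology_on {bisim_ball X x n | x n. x \<in> X} B"
    unfolding \<open>B = stone_basic X \<phi>\<close> stone_basic_eq_Union_bisim_ball
    by (intro generate_topology_on.UN) (blast intro: generate_topology_on.Basis)
qed

end
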